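(* Let $\pi$ be an adaptive batching policy and let $\mathfrak{t}^\pi_i$ be the (random) step at which $\pi$ starts its $i$-th batch (with $\mathfrak{t}^\pi_i=H+1$ if there are fewer than $i$ batches, in which case the corresponding term below is $0$). Define $$\mathrm{Var}^\pi_h(s)=\mathbb{E}\left[\left(\sum_{t=h}^{h+B_h-1}R_t+V^\pi_{h+B_h}(s_{h+B_h})-V^\pi_h(s)\right)^2\,\Big|\,\pi,s_h=s,E^n_h\right],$$ where $B_h=B^\pi_h(s)$. Then $$\mathbb{E}\left[\sum_{i=1}^H\mathrm{Var}^\pi_{\mathfrak{t}^\pi_i}(s_{\mathfrak{t}^\pi_i})\,\Big|\,\pi,s_1=s\right]=\mathbb{E}\left[\left(\sum_{t=1}^HR_t-V^\pi_1(s_1)\right)^2\,\Big|\,\pi,s_1=s\right]\le H^2.$$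
   Context: Episodic tabular MDP with horizon $H$, rewards $R_t\in[0,1]$, transitions independent across time steps. Fix $\ell\ge1$, $\ell_h=\min\{\ell,H-h+1\}$. $B$-step lookahead information from $s$ at step $h$ consists of the realized rewards and next states of all state-action pairs reachable from $s$ at steps $h,\dots,h+B-1$. An adaptive batching policy (ABP) $\pi$: the first batch starts at step $1$; at the start of a batch at step $h$ in state $s_h$ it picks $B_h=B^\pi_h(s_h)\in\{1,\dots,\ell_h\}$, observes fresh $B_h$-step lookahead information from $s_h$ (sampled independently of the past), plays a deterministic Markov policy depending on $(h,s_h,\text{lookahead})$ for $B_h$ steps, and the next batch starts at step $h+B_h$. $E^n_h$ is the event that a batch starts at step $h$, and $V^\pi_h(s)=\mathbb{E}[\sum_{t=h}^HR_t\mid s_h=s,E^n_h,\pi]$, $V^\pi_{H+1}\equiv0$. *)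

theory Defs
  imports "HOL-Probability.Probability"
begin

text \<open>The randomness of time step t is a random
  variable W t, mapping every state-action pair (x,a) to its realized reward and next state
  at step t: W t w (x,a) = (R, x'). The W t, t in {1..H}, are independent (transitions
  independent across time steps). Lookahead information for a batch of length B started at
  step h consists of the realizations at steps h, ..., h+B-1 (index i stands for step h+i).\<close>

type_synonym ('s,'a) realization = "'s \<times> 'a \<Rightarrow> real \<times> 's"

definition real_space :: "('s,'a) realization measure" where
  "real_space = Pi\<^sub>M UNIV (\<lambda>_. borel \<Otimes>\<^sub>M count_space UNIV)"

definition info_space :: "(nat \<Rightarrow> ('s,'a) realization) measure" where
  "info_space = Pi\<^sub>M UNIV (\<lambda>_. real_space)"

definition info :: "(nat \<Rightarrow> 'w \<Rightarrow> ('s,'a) realization) \<Rightarrow> nat \<Rightarrow> nat \<Rightarrow> 'w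
    \<Rightarrow> nat \<Rightarrow> ('s,'a) realization" where
  "info W h B w = (\<lambda>i. if i < B then W (h + i) w else (\<lambda>_. undefined))"

fun reach :: "'w measure \<Rightarrow> (nat \<Rightarrow> 'w \<Rightarrow> ('s,'a) realization) \<Rightarrow> nat \<Rightarrow> 's \<Rightarrow> nat
    \<Rightarrow> 's set" where
  "reach M W h s 0 = {s}"
| "reach M W h s (Suc i) = {y. \<exists>x\<in>reach M W h s i. \<exists>a.
      measure M {w \<in> space M. snd (W (h + i) w (x, a)) = y} > 0}"

text \<open>An adaptive batching policy is a pair (Bf, act): Bf h s is the batch length chosen at
  a batch start at step h in state s; act h s L t x is the action played at step t in state x
  during the batch started at step h in state s, after observing lookahead information L.\<close>
definition ABP :: "'w measure \<Rightarrow> (nat \<Rightarrow> 'w \<Rightarrow> ('s,'a) realization) \<Rightarrow> nat \<Rightarrow> nat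
    \<Rightarrow> (nat \<Rightarrow> 's \<Rightarrow> nat)
    \<Rightarrow> (nat \<Rightarrow> 's \<Rightarrow> (nat \<Rightarrow> ('s,'a) realization) \<Rightarrow> nat \<Rightarrow> 's \<Rightarrow> 'a) \<Rightarrow> bool" where
  "ABP M W H l Bf act \<longleftrightarrow>
     (\<forall>h\<in>{1..H}. \<forall>s. 1 \<le> Bf h s \<and> Bf h s \<le> min l (H - h + 1)) \<and>
     (\<forall>h\<in>{1..H}. \<forall>s L L'.
        (\<forall>i < Bf h s. \<forall>x\<in>reach M W h s i. \<forall>a. L i (x, a) = L' i (x, a))
        \<longrightarrow> act h s L = act h s L') \<and>
     (\<forall>h s t x. (\<lambda>L. act h s L t x) \<in> measurable info_space (count_space UNIV))"

text \<open>Trajectory of the policy started with a batch at step h0 in state s0; entry k gives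
  (state at step h0+k, start step of current batch, state at that batch start).\<close>
fun traj :: "(nat \<Rightarrow> 's \<Rightarrow> nat)
    \<Rightarrow> (nat \<Rightarrow> 's \<Rightarrow> (nat \<Rightarrow> ('s,'a) realization) \<Rightarrow> nat \<Rightarrow> 's \<Rightarrow> 'a)
    \<Rightarrow> (nat \<Rightarrow> 'w \<Rightarrow> ('s,'a) realization) \<Rightarrow> nat \<Rightarrow> 's \<Rightarrow> 'w \<Rightarrow> nat \<Rightarrow> 's \<times> nat \<times> 's" where
  "traj Bf act W h0 s0 w 0 = (s0, h0, s0)"
| "traj Bf act W h0 s0 w (Suc k) =
     (let (x, b, sb) = traj Bf act W h0 s0 w k;
          t = h0 + k;
          a = act b sb (info W b (Bf b sb) w) t x;
          x' = snd (W t w (x, a))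
      in if Suc t = b + Bf b sb then (x', Suc t, x') else (x', b, sb))"

definition state_at where
  "state_at Bf act W h0 s0 w t = fst (traj Bf act W h0 s0 w (t - h0))"

definition action_at where
  "action_at Bf act W h0 s0 w t =
     (case traj Bf act W h0 s0 w (t - h0) of (x, b, sb) \<Rightarrow> act b sb (info W b (Bf b sb) w) t x)"

definition reward_at where
  "reward_at Bf act W h0 s0 w t =
     fst (W t w (state_at Bf act W h0 s0 w t, action_at Bf act W h0 s0 w t))"

text \<open>Value function V^pi_h(s) (a batch starts at step h in state s); V_{H+1} = 0.\<close>
definition Val where
  "Val M W H Bf act h s = (\<integral>w. (\<Sum>t=h..H. reward_at Bf act W h s w t) \<partial>M)"

definition BVar where
  "BVar M W H Bf act h s =
     (let B = Bf h s in
      (\<integral>w. ((\<Sum>t=h..h+B-1. reward_at Bf act W h s w t)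
              + Val M W H Bf act (h + B) (state_at Bf act W h s w (h + B))
              - Val M W H Bf act h s)\<^sup>2 \<partial>M))"

text \<open>Start step of the i-th batch (i \<ge> 1) for the run started at step 1 in state s;
  equals H+1 if there are fewer than i batches.\<close>
fun tb where
  "tb H Bf act W s w 0 = 0"
| "tb H Bf act W s w (Suc 0) = 1"
| "tb H Bf act W s w (Suc (Suc i)) =
     (let t = tb H Bf act W s w (Suc i) in
      if t \<le> H then t + Bf t (state_at Bf act W 1 s w t) else H + 1)"

end

theory Submission imports Defs begin

text \<open>Write G h x for the deviation of the reward collected from a batch start (h, x) from its
  mean V h x. If this batch has length B and ends in state X at step m = h + B, then
  G h x = D + G m X, where the batch increment D is the quantity squared in Var h x. As the time
  steps are independent, D and X are functions of the noise before m, whereas for every fixed y,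
  G m y is a centred function of the noise from m on. Splitting over the finitely many values
  of X, the cross term E[D * G m X] vanishes and E[(G m X)^2] is the average of E[(G m y)^2]
  under the law of X. Induction over the batches gives E[(G 1 s)^2] = E[sum of Var over the
  batch starts], and |G| \<le> H gives the bound H^2.\<close>

lemma traj_within_first_batch:
  assumes "k < Bf h0 s0"
  shows "\<exists>x. traj Bf act W h0 s0 w k = (x, h0, s0)"
  using assms
proof (induction k)
  case (Suc k)
  then obtain x where "traj Bf act W h0 s0 w k = (x, h0, s0)" by auto
  with Suc.prems show ?case by (simp add: Let_def)
qed simp

lemma traj_first_batch_end:
  assumes "1 \<le> Bf h0 s0"
  shows "traj Bf act W h0 s0 w (Bf h0 s0) = (state_at Bf act W h0 s0 w (h0 + Bf h0 s0),
    h0 + Bf h0 s0, state_at Bf act W h0 s0 w (h0 + Bf h0 s0))"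
proof -
  obtain k where k: "Bf h0 s0 = Suc k" using assms by (cases "Bf h0 s0") auto
  then obtain y where "traj Bf act W h0 s0 w k = (y, h0, s0)"
    using traj_within_first_batch[of k Bf h0 s0 act W w] by auto
  then show ?thesis using k by (simp add: state_at_def Let_def)
qed

lemma traj_restart:
  assumes "traj Bf act W h0 s0 w k = (y, h0 + k, y)"
  shows "traj Bf act W h0 s0 w (k + j) = traj Bf act W (h0 + k) y w j"
proof (induction j)
  case (Suc j)
  then show ?case by (simp only: add_Suc_right traj.simps add.assoc)
qed (simp add: assms)

lemma state_at_restart:
  assumes "traj Bf act W h0 s0 w k = (y, h0 + k, y)" "h0 + k \<le> t"
  shows "state_at Bf act W h0 s0 w t = state_at Bf act W (h0 + k) y w t"
  using traj_restart[OF assms(1), of "t - (h0 + k)"] assms(2)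
  by (simp add: state_at_def add.commute)

lemma reward_at_restart:
  assumes "traj Bf act W h0 s0 w k = (y, h0 + k, y)" "h0 + k \<le> t"
  shows "reward_at Bf act W h0 s0 w t = reward_at Bf act W (h0 + k) y w t"
  using traj_restart[OF assms(1), of "t - (h0 + k)"] assms(2)
  by (simp add: reward_at_def state_at_def action_at_def add.commute)

definition batch_lengths_fit :: "nat \<Rightarrow> (nat \<Rightarrow> 's \<Rightarrow> nat) \<Rightarrow> bool" where
  "batch_lengths_fit H Bf \<longleftrightarrow> (\<forall>h\<in>{1..H}. \<forall>s. 1 \<le> Bf h s \<and> h + Bf h s \<le> H + 1)"

lemma batch_lengths_fitD:
  assumes "batch_lengths_fit H Bf" "h \<in> {1..H}"
  shows "1 \<le> Bf h s" "h + Bf h s \<le> H + 1"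
  using assms unfolding batch_lengths_fit_def by auto

lemma traj_batch_bounds:
  assumes Bf: "batch_lengths_fit H Bf"
    and "1 \<le> h0" "h0 + k \<le> H" "traj Bf act W h0 s0 w k = (x, b, sb)"
  shows "h0 \<le> b \<and> b \<le> h0 + k \<and> h0 + k < b + Bf b sb \<and> b + Bf b sb \<le> H + 1"
  using assms(3,4)
proof (induction k arbitrary: x b sb)
  case 0
  then have "h0 \<in> {1..H}" using assms(2) by simp
  with 0 show ?case using batch_lengths_fitD[OF Bf, of h0 s0] by auto
next
  case (Suc k)
  obtain x' b' sb' where prev: "traj Bf act W h0 s0 w k = (x', b', sb')"
    by (cases "traj Bf act W h0 s0 w k")
  have IH: "h0 \<le> b' \<and> b' \<le> h0 + k \<and> h0 + k < b' + Bf b' sb' \<and> b' + Bf b' sb' \<le> H + 1"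
    using Suc.IH[OF _ prev] Suc.prems(1) by simp
  show ?case
  proof (cases "Suc (h0 + k) = b' + Bf b' sb'")
    case True
    then have "b = Suc (h0 + k)" "sb = x" using Suc.prems(2) prev by (auto simp: Let_def)
    moreover have "b \<in> {1..H}" using calculation Suc.prems(1) assms(2) by simp
    ultimately show ?thesis using batch_lengths_fitD[OF Bf, of b sb] Suc.prems(1) by auto
  next
    case False
    then have "b = b'" "sb = sb'" using Suc.prems(2) prev by (auto simp: Let_def)
    then show ?thesis using IH False by simp
  qed
qed

lemma info_cong:
  assumes "\<And>t. t \<in> {b..<b + B} \<Longrightarrow> W t w = W' t w'"
  shows "info W b B w = info W' b B w'"
  using assms unfolding info_def by fastforce

lemma traj_cong:
  assumes "\<And>t. t \<in> T \<Longrightarrow> W t w = W' t w'"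
    and "\<And>k x b sb. k < K \<Longrightarrow> traj Bf act W h0 s0 w k = (x, b, sb) \<Longrightarrow>
      {b..<b + Bf b sb} \<subseteq> T \<and> h0 + k \<in> T"
  shows "traj Bf act W h0 s0 w K = traj Bf act W' h0 s0 w' K"
  using assms(2)
proof (induction K)
  case (Suc K)
  obtain x b sb where tr: "traj Bf act W h0 s0 w K = (x, b, sb)"
    by (cases "traj Bf act W h0 s0 w K")
  have "{b..<b + Bf b sb} \<subseteq> T" "h0 + K \<in> T" using Suc.prems[OF _ tr] by auto
  then have "info W b (Bf b sb) w = info W' b (Bf b sb) w'" "W (h0 + K) w = W' (h0 + K) w'"
    using assms(1) by (auto intro!: info_cong)
  moreover have "traj Bf act W' h0 s0 w' K = (x, b, sb)"
  proof -
    have "traj Bf act W h0 s0 w K = traj Bf act W' h0 s0 w' K"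
      by (rule Suc.IH, rule Suc.prems) auto
    with tr show ?thesis by simp
  qed
  ultimately show ?case using tr by (simp add: Let_def)
qed simp

lemma reward_at_cong:
  assumes "\<And>t. t \<in> T \<Longrightarrow> W t w = W' t w'"
    and "\<And>k x b sb. k \<le> t - h0 \<Longrightarrow> traj Bf act W h0 s0 w k = (x, b, sb) \<Longrightarrow>
      {b..<b + Bf b sb} \<subseteq> T \<and> h0 + k \<in> T"
    and "h0 \<le> t"
  shows "reward_at Bf act W h0 s0 w t = reward_at Bf act W' h0 s0 w' t"
proof -
  obtain x b sb where tr: "traj Bf act W h0 s0 w (t - h0) = (x, b, sb)"
    by (cases "traj Bf act W h0 s0 w (t - h0)")
  have "{b..<b + Bf b sb} \<subseteq> T" "t \<in> T" using assms(2)[OF _ tr] assms(3) by auto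
  then have "info W b (Bf b sb) w = info W' b (Bf b sb) w'" "W t w = W' t w'"
    using assms(1) by (auto intro: info_cong)
  moreover have "traj Bf act W' h0 s0 w' (t - h0) = (x, b, sb)"
  proof -
    have "traj Bf act W h0 s0 w (t - h0) = traj Bf act W' h0 s0 w' (t - h0)"
      by (rule traj_cong[of T W w W'], fact assms(1), rule assms(2)) auto
    with tr show ?thesis by simp
  qed
  ultimately show ?thesis using tr by (simp add: reward_at_def state_at_def action_at_def)
qed

lemma traj_first_batch_cong:
  assumes "\<And>t. t \<in> {h0..<h0 + Bf h0 s0} \<Longrightarrow> W t w = W' t w'" "k \<le> Bf h0 s0"
  shows "traj Bf act W h0 s0 w k = traj Bf act W' h0 s0 w' k"
proof (rule traj_cong[of "{h0..<h0 + Bf h0 s0}" W w W'])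
  show "\<And>t. t \<in> {h0..<h0 + Bf h0 s0} \<Longrightarrow> W t w = W' t w'" by (fact assms(1))
next
  fix k' x b sb
  assume "k' < k" "traj Bf act W h0 s0 w k' = (x, b, sb)"
  with assms(2) traj_within_first_batch[of k' Bf h0 s0 act W w]
  show "{b..<b + Bf b sb} \<subseteq> {h0..<h0 + Bf h0 s0} \<and> h0 + k' \<in> {h0..<h0 + Bf h0 s0}"
    by auto
qed

lemma reward_at_first_batch_cong:
  assumes "\<And>t. t \<in> {h0..<h0 + Bf h0 s0} \<Longrightarrow> W t w = W' t w'" "h0 \<le> t" "t < h0 + Bf h0 s0"
  shows "reward_at Bf act W h0 s0 w t = reward_at Bf act W' h0 s0 w' t"
proof (rule reward_at_cong[of "{h0..<h0 + Bf h0 s0}" W w W'])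
  show "\<And>t. t \<in> {h0..<h0 + Bf h0 s0} \<Longrightarrow> W t w = W' t w'" by (fact assms(1))
next
  fix k x b sb
  assume "k \<le> t - h0" "traj Bf act W h0 s0 w k = (x, b, sb)"
  with assms(2,3) traj_within_first_batch[of k Bf h0 s0 act W w]
  show "{b..<b + Bf b sb} \<subseteq> {h0..<h0 + Bf h0 s0} \<and> h0 + k \<in> {h0..<h0 + Bf h0 s0}"
    by auto
qed (fact assms(2))

lemma reward_at_cong_horizon:
  assumes Bf: "batch_lengths_fit H Bf"
    and "\<And>t. t \<in> {h0..H} \<Longrightarrow> W t w = W' t w'" "1 \<le> h0" "h0 \<le> t" "t \<le> H"
  shows "reward_at Bf act W h0 s0 w t = reward_at Bf act W' h0 s0 w' t"
proof (rule reward_at_cong[of "{h0..H}" W w W'])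
  show "\<And>t. t \<in> {h0..H} \<Longrightarrow> W t w = W' t w'" by (fact assms(2))
next
  fix k x b sb
  assume "k \<le> t - h0" "traj Bf act W h0 s0 w k = (x, b, sb)"
  with traj_batch_bounds[OF Bf, of h0 k] assms(3-5)
  show "{b..<b + Bf b sb} \<subseteq> {h0..H} \<and> h0 + k \<in> {h0..H}"
    by fastforce
qed (fact assms(4))

fun batch_sum :: "(nat \<Rightarrow> 's \<Rightarrow> real) \<Rightarrow> nat \<Rightarrow> (nat \<Rightarrow> 's \<Rightarrow> nat)
    \<Rightarrow> (nat \<Rightarrow> 's \<Rightarrow> (nat \<Rightarrow> ('s,'a) realization) \<Rightarrow> nat \<Rightarrow> 's \<Rightarrow> 'a)
    \<Rightarrow> (nat \<Rightarrow> 'w \<Rightarrow> ('s,'a) realization) \<Rightarrow> nat \<Rightarrow> nat \<Rightarrow> 's \<Rightarrow> 'w \<Rightarrow> real" where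
  "batch_sum f H Bf act W 0 h x w = 0"
| "batch_sum f H Bf act W (Suc n) h x w =
     (if h \<le> H then f h x + batch_sum f H Bf act W n (h + Bf h x)
        (state_at Bf act W h x w (h + Bf h x)) w else 0)"

lemma batch_sum_cong_horizon:
  assumes Bf: "batch_lengths_fit H Bf"
    and "\<And>t. t \<in> {h..H} \<Longrightarrow> W t w = W' t w'" "1 \<le> h"
  shows "batch_sum f H Bf act W n h x w = batch_sum f H Bf act W' n h x w'"
  using assms(2,3)
proof (induction n arbitrary: h x)
  case (Suc n)
  show ?case
  proof (cases "h \<le> H")
    case True
    then have "h \<in> {1..H}" using Suc.prems(2) by simp
    then have B: "1 \<le> Bf h x" "h + Bf h x \<le> H + 1" using batch_lengths_fitD[OF Bf] by auto
    then have "traj Bf act W h x w (Bf h x) = traj Bf act W' h x w' (Bf h x)"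
      using Suc.prems(1) by (intro traj_first_batch_cong) auto
    then have "state_at Bf act W h x w (h + Bf h x) = state_at Bf act W' h x w' (h + Bf h x)"
      by (simp add: state_at_def)
    with True B Suc.prems Suc.IH[of "h + Bf h x"] show ?thesis by simp
  qed simp
qed simp

lemma tb_beyond_horizon: "H < tb H Bf act W s w (Suc i) \<Longrightarrow> H < tb H Bf act W s w (Suc (i + j))"
  by (induction j) (auto simp: Let_def)

lemma tb_batch_start:
  assumes Bf: "batch_lengths_fit H Bf"
  shows "1 \<le> tb H Bf act W s w (Suc i) \<and> (tb H Bf act W s w (Suc i) \<le> H \<longrightarrow>
    traj Bf act W 1 s w (tb H Bf act W s w (Suc i) - 1) = (state_at Bf act W 1 s w (tb H Bf act W s w (Suc i)),
      tb H Bf act W s w (Suc i), state_at Bf act W 1 s w (tb H Bf act W s w (Suc i))))"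
proof (induction i)
  case 0
  then show ?case by (simp add: state_at_def)
next
  case (Suc i)
  let ?c = "tb H Bf act W s w (Suc i)"
  let ?y = "state_at Bf act W 1 s w ?c"
  show ?case
  proof (cases "?c \<le> H")
    case True
    then have c: "1 \<le> ?c" "1 \<le> Bf ?c ?y"
      and start: "traj Bf act W 1 s w (?c - 1) = (?y, 1 + (?c - 1), ?y)"
      using Suc.IH batch_lengths_fitD(1)[OF Bf] by auto
    have next_c: "tb H Bf act W s w (Suc (Suc i)) = ?c + Bf ?c ?y" using True by (simp add: Let_def)
    have "traj Bf act W 1 s w (?c + Bf ?c ?y - 1) = traj Bf act W ?c ?y w (Bf ?c ?y)"
      using traj_restart[OF start, of "Bf ?c ?y"] c by (simp add: add.commute)
    also have "\<dots> = (state_at Bf act W ?c ?y w (?c + Bf ?c ?y), ?c + Bf ?c ?y,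
        state_at Bf act W ?c ?y w (?c + Bf ?c ?y))"
      by (rule traj_first_batch_end) (fact c(2))
    also have "state_at Bf act W ?c ?y w (?c + Bf ?c ?y) = state_at Bf act W 1 s w (?c + Bf ?c ?y)"
      using state_at_restart[OF start, of "?c + Bf ?c ?y"] c by simp
    finally show ?thesis unfolding next_c using c by simp
  qed (simp add: Let_def)
qed

lemma batch_sum_tb:
  assumes Bf: "batch_lengths_fit H Bf"
  shows "batch_sum f H Bf act W n (tb H Bf act W s w (Suc i))
      (state_at Bf act W 1 s w (tb H Bf act W s w (Suc i))) w =
    (\<Sum>j<n. let t = tb H Bf act W s w (Suc (i + j)) in
      if t \<le> H then f t (state_at Bf act W 1 s w t) else 0)"
proof (induction n arbitrary: i)
  case (Suc n)
  let ?c = "tb H Bf act W s w (Suc i)"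
  let ?y = "state_at Bf act W 1 s w ?c"
  show ?case
  proof (cases "?c \<le> H")
    case True
    then have c: "1 \<le> ?c" "traj Bf act W 1 s w (?c - 1) = (?y, 1 + (?c - 1), ?y)"
      using tb_batch_start[OF Bf, where act=act and W=W and s=s and w=w and i=i] by auto
    let ?c' = "tb H Bf act W s w (Suc (Suc i))"
    have next_c: "?c' = ?c + Bf ?c ?y" using True by (simp add: Let_def)
    have "state_at Bf act W ?c ?y w ?c' = state_at Bf act W 1 s w ?c'"
      using state_at_restart[OF c(2), of ?c'] c(1) next_c by simp
    then have "batch_sum f H Bf act W (Suc n) ?c ?y w =
        f ?c ?y + batch_sum f H Bf act W n ?c' (state_at Bf act W 1 s w ?c') w"
      using True by (simp add: next_c del: tb.simps)
    also have "\<dots> = (\<Sum>j<Suc n. let t = tb H Bf act W s w (Suc (i + j)) in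
        if t \<le> H then f t (state_at Bf act W 1 s w t) else 0)"
      unfolding Suc.IH[of "Suc i"] sum.lessThan_Suc_shift using True by (simp add: Let_def del: tb.simps)
    finally show ?thesis .
  next
    case False
    then have "\<not> tb H Bf act W s w (Suc (i + j)) \<le> H" for j
      using tb_beyond_horizon[of H Bf act W s w i j] by simp
    with False show ?thesis by (simp add: Let_def del: tb.simps)
  qed
qed simp

lemma sum_tb_eq_batch_sum:
  assumes "batch_lengths_fit H Bf"
  shows "(\<Sum>i=1..H. let t = tb H Bf act W s w i in if t \<le> H then f t (state_at Bf act W 1 s w t) else 0)
    = batch_sum f H Bf act W H 1 s w"
  using batch_sum_tb[OF assms, where act=act and W=W and f=f and s=s and w=w and i=0 and n=H]
  by (simp add: sum.atLeast1_atMost_eq state_at_def)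

lemma space_real_space: "space real_space = UNIV"
  unfolding real_space_def by (auto simp: space_PiM space_pair_measure)

lemma measurable_info:
  assumes "\<And>t. W t \<in> measurable N real_space"
  shows "info W b B \<in> measurable N info_space"
  unfolding info_space_def info_def
  by (rule measurable_PiM_single') (use assms in \<open>auto simp: space_real_space\<close>)

lemma measurable_realization_eval:
  assumes "W t \<in> measurable N real_space"
  shows "(\<lambda>w. fst (W t w p)) \<in> borel_measurable N"
    and "(\<lambda>w. snd (W t w p)) \<in> measurable N (count_space UNIV)"
proof -
  have "(\<lambda>r. r p) \<in> measurable real_space (borel \<Otimes>\<^sub>M count_space UNIV)"
    unfolding real_space_def by (rule measurable_component_singleton) simp
  then have "(\<lambda>w. W t w p) \<in> measurable N (borel \<Otimes>\<^sub>M count_space UNIV)"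
    using assms by (rule measurable_compose[rotated])
  then show "(\<lambda>w. fst (W t w p)) \<in> borel_measurable N"
    and "(\<lambda>w. snd (W t w p)) \<in> measurable N (count_space UNIV)"
    by measurable
qed

context
  fixes act :: "nat \<Rightarrow> 's::countable \<Rightarrow> (nat \<Rightarrow> ('s,'a::countable) realization) \<Rightarrow> nat \<Rightarrow> 's \<Rightarrow> 'a"
    and W :: "nat \<Rightarrow> 'w \<Rightarrow> ('s,'a) realization" and N :: "'w measure"
  assumes act_measurable: "\<And>h s t x. (\<lambda>L. act h s L t x) \<in> measurable info_space (count_space UNIV)"
    and W_measurable: "\<And>t. W t \<in> measurable N real_space"
begin

lemma measurable_act:
  "(\<lambda>w. act b sb (info W b B w) t x) \<in> measurable N (count_space UNIV)"
  using measurable_info[OF W_measurable] act_measurable by (rule measurable_compose)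

lemma measurable_traj: "(\<lambda>w. traj Bf act W h0 s0 w k) \<in> measurable N (count_space UNIV)"
proof (induction k)
  case (Suc k)
  let ?t = "h0 + k"
  define step where "step p w = (case p of (x, b, sb) \<Rightarrow>
    (let x' = snd (W ?t w (x, act b sb (info W b (Bf b sb) w) ?t x))
     in if Suc ?t = b + Bf b sb then (x', Suc ?t, x') else (x', b, sb)))" for p w
  have step_measurable: "step p \<in> measurable N (count_space UNIV)" for p
  proof -
    obtain x b sb where p: "p = (x, b, sb)" by (cases p)
    have "(\<lambda>w. snd (W ?t w (x, act b sb (info W b (Bf b sb) w) ?t x))) \<in> measurable N (count_space UNIV)"
      using measurable_realization_eval(2)[OF W_measurable] measurable_act
      by (rule measurable_compose_countable)
    then show ?thesis unfolding step_def p by simp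
  qed
  have "(\<lambda>w. step (traj Bf act W h0 s0 w k) w) \<in> measurable N (count_space UNIV)"
    using step_measurable Suc.IH by (rule measurable_compose_countable)
  moreover have "traj Bf act W h0 s0 w (Suc k) = step (traj Bf act W h0 s0 w k) w" for w
    unfolding step_def by (simp add: split_beta Let_def)
  ultimately show ?case by simp
qed simp

lemma measurable_state_at: "(\<lambda>w. state_at Bf act W h0 s0 w t) \<in> measurable N (count_space UNIV)"
  unfolding state_at_def using measurable_traj by (rule measurable_compose) simp

lemma measurable_reward_at: "(\<lambda>w. reward_at Bf act W h0 s0 w t) \<in> borel_measurable N"
proof -
  define rew where "rew p w = (case p of (x, b, sb) \<Rightarrow>
    fst (W t w (x, act b sb (info W b (Bf b sb) w) t x)))" for p w
  have rew_measurable: "rew p \<in> borel_measurable N" for p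
  proof -
    obtain x b sb where p: "p = (x, b, sb)" by (cases p)
    have "(\<lambda>w. fst (W t w (x, act b sb (info W b (Bf b sb) w) t x))) \<in> borel_measurable N"
      using measurable_realization_eval(1)[OF W_measurable] measurable_act
      by (rule measurable_compose_countable)
    then show ?thesis unfolding rew_def p by simp
  qed
  have "(\<lambda>w. rew (traj Bf act W h0 s0 w (t - h0)) w) \<in> borel_measurable N"
    using rew_measurable measurable_traj by (rule measurable_compose_countable)
  moreover have "reward_at Bf act W h0 s0 w t = rew (traj Bf act W h0 s0 w (t - h0)) w" for w
    unfolding rew_def reward_at_def state_at_def action_at_def by (simp add: split_beta)
  ultimately show ?thesis by simp
qed

lemma measurable_batch_sum: "(\<lambda>w. batch_sum f H Bf act W n h x w) \<in> borel_measurable N"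
proof (induction n arbitrary: h x)
  case (Suc n)
  have "(\<lambda>w. batch_sum f H Bf act W n (h + Bf h x) (state_at Bf act W h x w (h + Bf h x)) w)
      \<in> borel_measurable N"
    using Suc.IH measurable_state_at by (rule measurable_compose_countable)
  then show ?case by simp
next
  case 0
  have "batch_sum f H Bf act W 0 h x = (\<lambda>_. 0)" by (rule ext) simp
  then show ?case by simp
qed

end

lemma (in prob_space) indep_var_integral_mult_select:
  fixes Y :: "'b \<Rightarrow> 'y::finite" and f :: "'b \<Rightarrow> real" and g :: "'y \<Rightarrow> 'b \<Rightarrow> real"
  assumes indep: "indep_var N X N' X'"
    and Y: "Y \<in> measurable N (count_space UNIV)" and f: "f \<in> borel_measurable N"
    and g: "\<And>y. g y \<in> borel_measurable N'"
    and int_f: "integrable M (\<lambda>w. f (X w))" and int_g: "\<And>y. integrable M (\<lambda>w. g y (X' w))"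
  shows "integrable M (\<lambda>w. f (X w) * g (Y (X w)) (X' w))"
    and "(\<integral>w. f (X w) * g (Y (X w)) (X' w) \<partial>M) =
      (\<Sum>y\<in>UNIV. (\<integral>w. (if Y (X w) = y then f (X w) else 0) \<partial>M) * (\<integral>w. g y (X' w) \<partial>M))"
proof -
  define f_on where "f_on y b = (if Y b = y then f b else 0)" for y b
  have select: "f (X w) * g (Y (X w)) (X' w) = (\<Sum>y\<in>UNIV. f_on y (X w) * g y (X' w))" for w
  proof -
    have "(\<Sum>y\<in>UNIV. f_on y (X w) * g y (X' w)) =
        (\<Sum>y\<in>UNIV. if Y (X w) = y then f (X w) * g y (X' w) else 0)"
      by (rule sum.cong) (simp_all add: f_on_def)
    then show ?thesis by simp
  qed
  have f_on: "f_on y \<in> borel_measurable N" for y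
    unfolding f_on_def using Y f by measurable
  have "integrable M (\<lambda>w. f_on y (X w))" for y
  proof (rule Bochner_Integration.integrable_bound[OF int_f])
    show "(\<lambda>w. f_on y (X w)) \<in> borel_measurable M"
      using f_on indep_var_rv1[OF indep] by (rule measurable_compose[rotated])
  qed (simp add: f_on_def)
  moreover have "indep_var borel (\<lambda>w. f_on y (X w)) borel (\<lambda>w. g y (X' w))" for y
    using indep_var_compose[OF indep f_on g] by (simp add: comp_def)
  ultimately have "integrable M (\<lambda>w. f_on y (X w) * g y (X' w))"
    and "(\<integral>w. f_on y (X w) * g y (X' w) \<partial>M) =
      (\<integral>w. f_on y (X w) \<partial>M) * (\<integral>w. g y (X' w) \<partial>M)" for y
    using int_g indep_var_integrable indep_var_lebesgue_integral by blast+
  then show "integrable M (\<lambda>w. f (X w) * g (Y (X w)) (X' w))"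
    and "(\<integral>w. f (X w) * g (Y (X w)) (X' w) \<partial>M) =
      (\<Sum>y\<in>UNIV. (\<integral>w. (if Y (X w) = y then f (X w) else 0) \<partial>M) * (\<integral>w. g y (X' w) \<partial>M))"
    unfolding select by (simp_all add: f_on_def)
qed

abbreviation noise_space :: "nat set \<Rightarrow> (nat \<Rightarrow> ('s,'a) realization) measure" where
  "noise_space J \<equiv> Pi\<^sub>M J (\<lambda>_. real_space)"

definition coord :: "nat \<Rightarrow> (nat \<Rightarrow> ('s,'a) realization) \<Rightarrow> ('s,'a) realization" where
  "coord t \<omega> = \<omega> t"

lemma measurable_coord: "coord t \<in> measurable (noise_space J) real_space"
proof (cases "t \<in> J")
  case True
  then show ?thesis unfolding coord_def by (rule measurable_component_singleton)
next
  case False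
  have "(\<lambda>_. undefined) \<in> measurable (noise_space J) real_space"
    by (simp add: space_real_space)
  then show ?thesis
    by (rule measurable_cong[where g="\<lambda>_. undefined", THEN iffD2, rotated])
      (use False in \<open>simp add: coord_def space_PiM PiE_def extensional_def\<close>)
qed

locale batched_mdp = prob_space M for M :: "'w measure" +
  fixes W :: "nat \<Rightarrow> 'w \<Rightarrow> ('s::finite, 'a::finite) realization"
    and H l :: nat
    and Bf :: "nat \<Rightarrow> 's \<Rightarrow> nat"
    and act :: "nat \<Rightarrow> 's \<Rightarrow> (nat \<Rightarrow> ('s,'a) realization) \<Rightarrow> nat \<Rightarrow> 's \<Rightarrow> 'a"
  assumes indep: "indep_vars (\<lambda>_. real_space) W {1..H}"
    and rewards_unit: "\<forall>t\<in>{1..H}. \<forall>w\<in>space M. \<forall>p. fst (W t w p) \<in> {0..1}"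
    and abp: "ABP M W H l Bf act"
begin

lemma batch_lengths_fit: "batch_lengths_fit H Bf"
  unfolding batch_lengths_fit_def
proof (intro ballI allI)
  fix h s
  assume h: "h \<in> {1..H}"
  with abp have "1 \<le> Bf h s" "Bf h s \<le> H - h + 1" unfolding ABP_def by auto
  with h show "1 \<le> Bf h s \<and> h + Bf h s \<le> H + 1" by auto
qed

lemmas batch_length_bounds = batch_lengths_fitD[OF batch_lengths_fit]

lemma act_measurable: "(\<lambda>L. act h s L t x) \<in> measurable info_space (count_space UNIV)"
  using abp unfolding ABP_def by auto

definition W_on :: "nat set \<Rightarrow> 'w \<Rightarrow> nat \<Rightarrow> ('s,'a) realization" where
  "W_on J w = restrict (\<lambda>t. W t w) J"

lemma coord_W_on: "t \<in> J \<Longrightarrow> coord t (W_on J w) = W t w"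
  unfolding coord_def W_on_def by simp

lemma measurable_W_on: "J \<subseteq> {1..H} \<Longrightarrow> W_on J \<in> measurable M (noise_space J)"
  using indep unfolding W_on_def indep_vars_def by (intro measurable_restrict) auto

lemma indep_past_future:
  "1 \<le> m \<Longrightarrow> m \<le> H + 1 \<Longrightarrow> indep_var (noise_space {1..<m}) (W_on {1..<m})
     (noise_space {m..H}) (W_on {m..H})"
  unfolding W_on_def by (rule indep_var_restrict[OF indep]) auto

lemmas measurable_coord_traj =
  measurable_state_at[where act=act and W=coord and N="noise_space J", OF act_measurable measurable_coord]
  measurable_reward_at[where act=act and W=coord and N="noise_space J", OF act_measurable measurable_coord]
  measurable_batch_sum[where act=act and W=coord and N="noise_space J", OF act_measurable measurable_coord]
  for J

text \<open>The noise process is a parameter U: evaluated with U = coord at W_on J w, a quantity of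
  the run is exhibited as a function of the noise at the times J only.\<close>

definition ret :: "(nat \<Rightarrow> 'v \<Rightarrow> ('s,'a) realization) \<Rightarrow> nat \<Rightarrow> 's \<Rightarrow> 'v \<Rightarrow> real" where
  "ret U h x u = (\<Sum>t=h..H. reward_at Bf act U h x u t)"

definition dev :: "(nat \<Rightarrow> 'v \<Rightarrow> ('s,'a) realization) \<Rightarrow> nat \<Rightarrow> 's \<Rightarrow> 'v \<Rightarrow> real" where
  "dev U h x u = ret U h x u - Val M W H Bf act h x"

definition batch_incr :: "(nat \<Rightarrow> 'v \<Rightarrow> ('s,'a) realization) \<Rightarrow> nat \<Rightarrow> 's \<Rightarrow> 'v \<Rightarrow> real" where
  "batch_incr U h x u = (\<Sum>t=h..<h + Bf h x. reward_at Bf act U h x u t)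
     + Val M W H Bf act (h + Bf h x) (state_at Bf act U h x u (h + Bf h x)) - Val M W H Bf act h x"

lemma reward_at_future:
  "1 \<le> m \<Longrightarrow> m \<le> h \<Longrightarrow> h \<le> t \<Longrightarrow> t \<le> H \<Longrightarrow>
    reward_at Bf act W h x w t = reward_at Bf act coord h x (W_on {m..H} w) t"
  by (rule reward_at_cong_horizon[OF batch_lengths_fit]) (auto simp: coord_W_on)

lemma batch_sum_future:
  "1 \<le> m \<Longrightarrow> m \<le> h \<Longrightarrow>
    batch_sum f H Bf act W n h x = (\<lambda>w. batch_sum f H Bf act coord n h x (W_on {m..H} w))"
  by (rule ext, rule batch_sum_cong_horizon[OF batch_lengths_fit]) (auto simp: coord_W_on)

lemma ret_future:
  "1 \<le> m \<Longrightarrow> m \<le> h \<Longrightarrow> ret W h x = (\<lambda>w. ret coord h x (W_on {m..H} w))"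
  unfolding ret_def by (simp add: reward_at_future fun_eq_iff)

lemma dev_future:
  "1 \<le> m \<Longrightarrow> m \<le> h \<Longrightarrow> dev W h x = (\<lambda>w. dev coord h x (W_on {m..H} w))"
  unfolding dev_def by (simp add: ret_future fun_eq_iff)

lemma batch_end_past:
  assumes "1 \<le> h"
  shows "state_at Bf act W h x w (h + Bf h x) =
      state_at Bf act coord h x (W_on {1..<h + Bf h x} w) (h + Bf h x)"
    and "batch_incr W h x = (\<lambda>w. batch_incr coord h x (W_on {1..<h + Bf h x} w))"
proof -
  have agree: "W t w = coord t (W_on {1..<h + Bf h x} w)" if "t \<in> {h..<h + Bf h x}" for t w
    using that assms by (simp add: coord_W_on)
  then have "traj Bf act W h x w (Bf h x) = traj Bf act coord h x (W_on {1..<h + Bf h x} w) (Bf h x)"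
    for w by (intro traj_first_batch_cong) auto
  then show "state_at Bf act W h x w (h + Bf h x) =
      state_at Bf act coord h x (W_on {1..<h + Bf h x} w) (h + Bf h x)" for w
    by (simp add: state_at_def)
  moreover have "reward_at Bf act W h x w t = reward_at Bf act coord h x (W_on {1..<h + Bf h x} w) t"
    if "t \<in> {h..<h + Bf h x}" for t w
    using that agree by (intro reward_at_first_batch_cong) auto
  ultimately show "batch_incr W h x = (\<lambda>w. batch_incr coord h x (W_on {1..<h + Bf h x} w))"
    unfolding batch_incr_def by (simp add: fun_eq_iff)
qed

lemma sum_rewards_bounds:
  assumes "1 \<le> a" "b \<le> H + 1" "w \<in> space M"
  shows "0 \<le> (\<Sum>t=a..<b. reward_at Bf act W h x w t) \<and>
    (\<Sum>t=a..<b. reward_at Bf act W h x w t) \<le> real (b - a)"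
proof -
  have "reward_at Bf act W h x w t \<in> {0..1}" if "t \<in> {a..<b}" for t
    using rewards_unit that assms unfolding reward_at_def by auto
  then show ?thesis
    using sum_bounded_above[of "{a..<b}" "\<lambda>t. reward_at Bf act W h x w t" 1]
    by (auto intro: sum_nonneg)
qed

lemma ret_bounds:
  assumes "1 \<le> h" "w \<in> space M"
  shows "0 \<le> ret W h x w \<and> ret W h x w \<le> real (H + 1 - h)"
  using sum_rewards_bounds[OF assms(1) _ assms(2), of "H + 1"]
  unfolding ret_def by (simp add: atLeastLessThanSuc_atLeastAtMost)

lemma measurable_ret_coord: "ret coord h x \<in> borel_measurable (noise_space J)"
  unfolding ret_def[abs_def] by (intro borel_measurable_sum measurable_coord_traj)

lemma measurable_dev_coord: "dev coord h x \<in> borel_measurable (noise_space J)"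
  unfolding dev_def[abs_def] using measurable_ret_coord by measurable

lemma measurable_batch_incr_coord: "batch_incr coord h x \<in> borel_measurable (noise_space J)"
proof -
  have "(\<lambda>\<omega>. Val M W H Bf act (h + Bf h x) (state_at Bf act coord h x \<omega> (h + Bf h x)))
      \<in> borel_measurable (noise_space J)"
    using measurable_coord_traj(1) by (rule measurable_compose) simp
  then show ?thesis
    unfolding batch_incr_def[abs_def] using measurable_coord_traj(2) by measurable
qed

lemma integrable_ret: "1 \<le> h \<Longrightarrow> integrable M (ret W h x)"
proof (rule integrable_const_bound)
  assume "1 \<le> h"
  then have "ret W h x = (\<lambda>w. ret coord h x (W_on {h..H} w))"
    by (simp add: ret_future[of h h])
  with \<open>1 \<le> h\<close> show "ret W h x \<in> borel_measurable M"
    using measurable_compose[OF measurable_W_on measurable_ret_coord] by simp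
  have "norm (ret W h x w) \<le> real H" if "w \<in> space M" for w
  proof -
    have "real (H + 1 - h) \<le> real H" using \<open>1 \<le> h\<close> by simp
    with ret_bounds[OF \<open>1 \<le> h\<close> that, of x] show ?thesis by simp
  qed
  then show "AE w in M. norm (ret W h x w) \<le> real H" by (rule AE_I2)
qed

lemma Val_bounds:
  assumes "1 \<le> h"
  shows "0 \<le> Val M W H Bf act h x \<and> Val M W H Bf act h x \<le> real (H + 1 - h)"
proof -
  have "Val M W H Bf act h x = (\<integral>w. ret W h x w \<partial>M)"
    unfolding Val_def ret_def ..
  then show ?thesis using ret_bounds[OF assms] integrable_ret[OF assms]
    by (auto intro!: integral_ge_const integral_le_const AE_I2)
qed

lemma integrable_dev: "1 \<le> h \<Longrightarrow> integrable M (dev W h x)"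
  unfolding dev_def[abs_def] using integrable_ret by simp

lemma integral_dev: "1 \<le> h \<Longrightarrow> (\<integral>w. dev W h x w \<partial>M) = 0"
  using integrable_ret by (simp add: dev_def Val_def ret_def[symmetric] prob_space)

lemma dev_bound: "1 \<le> h \<Longrightarrow> w \<in> space M \<Longrightarrow> \<bar>dev W h x w\<bar> \<le> real H"
  using ret_bounds[of h w x] Val_bounds[of h x] unfolding dev_def by auto

lemma batch_incr_bound:
  assumes "h \<in> {1..H}" "w \<in> space M"
  shows "\<bar>batch_incr W h x w\<bar> \<le> real H"
proof -
  let ?m = "h + Bf h x" and ?y = "state_at Bf act W h x w (h + Bf h x)"
  let ?R = "\<Sum>t=h..<?m. reward_at Bf act W h x w t"
  have m: "1 \<le> Bf h x" "?m \<le> H + 1" using batch_length_bounds[OF assms(1)] by auto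
  have "0 \<le> ?R" "?R \<le> real (Bf h x)"
    using sum_rewards_bounds[of h ?m w h x] assms m by auto
  moreover have "0 \<le> Val M W H Bf act ?m ?y" "Val M W H Bf act ?m ?y \<le> real (H + 1 - ?m)"
    using Val_bounds[of ?m ?y] m by auto
  moreover have "0 \<le> Val M W H Bf act h x" "Val M W H Bf act h x \<le> real (H + 1 - h)"
    using Val_bounds[of h x] assms by auto
  moreover have "real (H + 1 - ?m) + real (Bf h x) = real (H + 1 - h)" "real (H + 1 - h) \<le> real H"
    using m assms by auto
  ultimately show ?thesis unfolding batch_incr_def by linarith
qed

lemma dev_split:
  assumes "h \<in> {1..H}"
  shows "dev W h x w = batch_incr W h x w +
    dev W (h + Bf h x) (state_at Bf act W h x w (h + Bf h x)) w"
proof -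
  let ?m = "h + Bf h x" and ?y = "state_at Bf act W h x w (h + Bf h x)"
  have m: "h < ?m" "?m \<le> H + 1" using batch_length_bounds[OF assms, of x] by auto
  have "ret W h x w = (\<Sum>t=h..<H + 1. reward_at Bf act W h x w t)"
    unfolding ret_def by (simp add: atLeastLessThanSuc_atLeastAtMost)
  also have "\<dots> = (\<Sum>t=h..<?m. reward_at Bf act W h x w t) + (\<Sum>t=?m..<H + 1. reward_at Bf act W h x w t)"
    using m by (intro sum.atLeastLessThan_concat[symmetric]) auto
  also have "(\<Sum>t=?m..<H + 1. reward_at Bf act W h x w t) =
      (\<Sum>t=?m..<H + 1. reward_at Bf act W ?m ?y w t)"
    using batch_length_bounds[OF assms, of x]
    by (intro sum.cong refl reward_at_restart[OF traj_first_batch_end]) auto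
  also have "\<dots> = ret W ?m ?y w"
    unfolding ret_def by (simp add: atLeastLessThanSuc_atLeastAtMost)
  finally show ?thesis unfolding dev_def batch_incr_def by simp
qed

lemma BVar_eq:
  assumes "h \<in> {1..H}"
  shows "BVar M W H Bf act h x = (\<integral>w. (batch_incr W h x w)\<^sup>2 \<partial>M)"
proof -
  have "{h..h + Bf h x - 1} = {h..<h + Bf h x}" using batch_length_bounds[OF assms, of x] by auto
  then show ?thesis unfolding BVar_def batch_incr_def by (simp add: Let_def)
qed

lemma measurable_batch_incr:
  assumes "h \<in> {1..H}"
  shows "batch_incr W h x \<in> borel_measurable M"
proof -
  have "batch_incr W h x = (\<lambda>w. batch_incr coord h x (W_on {1..<h + Bf h x} w))"
    using assms batch_end_past(2) by simp
  moreover have "{1..<h + Bf h x} \<subseteq> {1..H}" using batch_length_bounds[OF assms, of x] by auto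
  ultimately show ?thesis
    using measurable_compose[OF measurable_W_on measurable_batch_incr_coord] by simp
qed

lemma integral_batch_end_select:
  fixes h :: nat and x :: 's
    and f :: "(nat \<Rightarrow> ('s,'a) realization) \<Rightarrow> real"
    and g :: "'s \<Rightarrow> (nat \<Rightarrow> ('s,'a) realization) \<Rightarrow> real"
  assumes h: "h \<in> {1..H}"
  defines "m \<equiv> h + Bf h x"
  assumes f: "f \<in> borel_measurable (noise_space {1..<m})" "integrable M (\<lambda>w. f (W_on {1..<m} w))"
    and g: "\<And>y. g y \<in> borel_measurable (noise_space {m..H})"
      "\<And>y. integrable M (\<lambda>w. g y (W_on {m..H} w))"
  shows "integrable M (\<lambda>w. f (W_on {1..<m} w) * g (state_at Bf act W h x w m) (W_on {m..H} w))"
    and "(\<integral>w. f (W_on {1..<m} w) * g (state_at Bf act W h x w m) (W_on {m..H} w) \<partial>M) =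
      (\<Sum>y\<in>UNIV. (\<integral>w. (if state_at Bf act W h x w m = y then f (W_on {1..<m} w) else 0) \<partial>M)
        * (\<integral>w. g y (W_on {m..H} w) \<partial>M))"
proof -
  have m: "1 \<le> m" "m \<le> H + 1" using batch_length_bounds[OF h, of x] h by (auto simp: m_def)
  have state: "state_at Bf act W h x w m = state_at Bf act coord h x (W_on {1..<m} w) m" for w
    unfolding m_def using batch_end_past(1) h by simp
  note select = indep_var_integral_mult_select[where g=g, OF indep_past_future[OF m]
      measurable_coord_traj(1)[of Bf h x m] f(1) g(1) f(2) g(2)]
  show "integrable M (\<lambda>w. f (W_on {1..<m} w) * g (state_at Bf act W h x w m) (W_on {m..H} w))"
    and "(\<integral>w. f (W_on {1..<m} w) * g (state_at Bf act W h x w m) (W_on {m..H} w) \<partial>M) =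
      (\<Sum>y\<in>UNIV. (\<integral>w. (if state_at Bf act W h x w m = y then f (W_on {1..<m} w) else 0) \<partial>M)
        * (\<integral>w. g y (W_on {m..H} w) \<partial>M))"
    unfolding state using select by simp_all
qed

lemma integral_cross_term:
  fixes h :: nat and x :: 's
  assumes h: "h \<in> {1..H}"
  defines "m \<equiv> h + Bf h x"
  shows "integrable M (\<lambda>w. batch_incr W h x w * dev W m (state_at Bf act W h x w m) w)"
    and "(\<integral>w. batch_incr W h x w * dev W m (state_at Bf act W h x w m) w \<partial>M) = 0"
proof -
  have m: "1 \<le> m" using batch_length_bounds[OF h, of x] by (simp add: m_def)
  have "integrable M (batch_incr W h x)"
    using batch_incr_bound[OF h]
    by (intro integrable_const_bound[where B="real H", OF AE_I2] measurable_batch_incr h) auto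
  then have int_incr: "integrable M (\<lambda>w. batch_incr coord h x (W_on {1..<m} w))"
    using batch_end_past(2) h by (simp add: m_def)
  have int_dev: "integrable M (\<lambda>w. dev coord m y (W_on {m..H} w))" for y
    using integrable_dev[OF m, of y] dev_future[OF m order.refl] by simp
  note select = integral_batch_end_select[OF h, where x=x and f="batch_incr coord h x" and g="dev coord m",
      folded m_def, OF measurable_batch_incr_coord int_incr measurable_dev_coord int_dev]
  have product: "batch_incr W h x w * dev W m (state_at Bf act W h x w m) w =
      batch_incr coord h x (W_on {1..<m} w) * dev coord m (state_at Bf act W h x w m) (W_on {m..H} w)" for w
    using batch_end_past(2) dev_future[OF m order.refl] h by (simp add: m_def)
  have "(\<integral>w. dev coord m y (W_on {m..H} w) \<partial>M) = 0" for y
    using integral_dev[OF m, of y] dev_future[OF m order.refl] by simp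
  with select show "integrable M (\<lambda>w. batch_incr W h x w * dev W m (state_at Bf act W h x w m) w)"
    and "(\<integral>w. batch_incr W h x w * dev W m (state_at Bf act W h x w m) w \<partial>M) = 0"
    unfolding product by simp_all
qed

lemma integral_batch_end_cong:
  fixes h :: nat and x :: 's and g g' :: "'s \<Rightarrow> (nat \<Rightarrow> ('s,'a) realization) \<Rightarrow> real"
  assumes h: "h \<in> {1..H}"
  defines "m \<equiv> h + Bf h x"
  assumes g: "\<And>y. g y \<in> borel_measurable (noise_space {m..H})"
      "\<And>y. integrable M (\<lambda>w. g y (W_on {m..H} w))"
    and g': "\<And>y. g' y \<in> borel_measurable (noise_space {m..H})"
      "\<And>y. integrable M (\<lambda>w. g' y (W_on {m..H} w))"
    and eq: "\<And>y. (\<integral>w. g y (W_on {m..H} w) \<partial>M) = (\<integral>w. g' y (W_on {m..H} w) \<partial>M)"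
  shows "integrable M (\<lambda>w. g (state_at Bf act W h x w m) (W_on {m..H} w))"
    and "integrable M (\<lambda>w. g' (state_at Bf act W h x w m) (W_on {m..H} w))"
    and "(\<integral>w. g (state_at Bf act W h x w m) (W_on {m..H} w) \<partial>M) =
      (\<integral>w. g' (state_at Bf act W h x w m) (W_on {m..H} w) \<partial>M)"
proof -
  have one: "(\<lambda>_. 1) \<in> borel_measurable (noise_space {1..<m})" "integrable M (\<lambda>_. 1)"
    by simp_all
  note select = integral_batch_end_select[OF h, where x=x and f="\<lambda>_. 1", folded m_def, OF one]
  from select[where g=g, OF g] select[where g=g', OF g'] eq
  show "integrable M (\<lambda>w. g (state_at Bf act W h x w m) (W_on {m..H} w))"
    and "integrable M (\<lambda>w. g' (state_at Bf act W h x w m) (W_on {m..H} w))"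
    and "(\<integral>w. g (state_at Bf act W h x w m) (W_on {m..H} w) \<partial>M) =
      (\<integral>w. g' (state_at Bf act W h x w m) (W_on {m..H} w) \<partial>M)"
    by simp_all
qed

lemma integrable_dev_square: "1 \<le> h \<Longrightarrow> integrable M (\<lambda>w. (dev W h x w)\<^sup>2)"
  using dev_bound[of h _ x] integrable_dev[of h x]
  by (intro integrable_const_bound[where B="(real H)\<^sup>2", OF AE_I2])
    (auto simp: abs_le_square_iff[symmetric] borel_measurable_integrable)

lemma integrable_batch_incr_square:
  "h \<in> {1..H} \<Longrightarrow> integrable M (\<lambda>w. (batch_incr W h x w)\<^sup>2)"
  using batch_incr_bound[of h _ x] measurable_batch_incr[of h x]
  by (intro integrable_const_bound[where B="(real H)\<^sup>2", OF AE_I2])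
    (auto simp: abs_le_square_iff[symmetric])

lemma integral_dev_square_step:
  fixes h :: nat and x :: 's
  assumes h: "h \<in> {1..H}"
  defines "m \<equiv> h + Bf h x"
  assumes int_IH: "\<And>y. integrable M (batch_sum (BVar M W H Bf act) H Bf act W n m y)"
    and IH: "\<And>y. (\<integral>w. (dev W m y w)\<^sup>2 \<partial>M) =
      (\<integral>w. batch_sum (BVar M W H Bf act) H Bf act W n m y w \<partial>M)"
  shows "integrable M (batch_sum (BVar M W H Bf act) H Bf act W (Suc n) h x)"
    and "(\<integral>w. (dev W h x w)\<^sup>2 \<partial>M) =
      (\<integral>w. batch_sum (BVar M W H Bf act) H Bf act W (Suc n) h x w \<partial>M)"
proof -
  let ?BV = "BVar M W H Bf act" and ?X = "\<lambda>w. state_at Bf act W h x w m"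
  let ?S = "\<lambda>w. batch_sum ?BV H Bf act W n m (?X w) w" and ?G = "\<lambda>w. dev W m (?X w) w"
  have m: "1 \<le> m" using batch_length_bounds[OF h, of x] by (simp add: m_def)
  note dev_m = dev_future[OF m order.refl] and sum_m = batch_sum_future[OF m order.refl]
  have G2: "integrable M (\<lambda>w. (?G w)\<^sup>2)" and S: "integrable M ?S"
    and G2_S: "(\<integral>w. (?G w)\<^sup>2 \<partial>M) = (\<integral>w. ?S w \<partial>M)"
    using integral_batch_end_cong[OF h, where x=x and g="\<lambda>y \<omega>. (dev coord m y \<omega>)\<^sup>2"
        and g'="batch_sum ?BV H Bf act coord n m", folded m_def]
      integrable_dev_square[OF m] int_IH IH measurable_dev_coord measurable_coord_traj(3)
    unfolding dev_m sum_m by simp_all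
  have DG: "integrable M (\<lambda>w. batch_incr W h x w * ?G w)"
    and DG_0: "(\<integral>w. batch_incr W h x w * ?G w \<partial>M) = 0"
    using integral_cross_term[OF h, of x] by (simp_all add: m_def)
  have sum_Suc: "batch_sum ?BV H Bf act W (Suc n) h x = (\<lambda>w. ?BV h x + ?S w)"
    using h by (simp add: m_def fun_eq_iff)
  with S show "integrable M (batch_sum ?BV H Bf act W (Suc n) h x)" by simp
  have "(\<integral>w. (dev W h x w)\<^sup>2 \<partial>M) =
      (\<integral>w. (batch_incr W h x w)\<^sup>2 + 2 * (batch_incr W h x w * ?G w) + (?G w)\<^sup>2 \<partial>M)"
    using dev_split[OF h, of x] by (simp add: m_def power2_eq_square algebra_simps)
  also have "\<dots> = ?BV h x + (\<integral>w. ?S w \<partial>M)"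
    using integrable_batch_incr_square[OF h, of x] DG G2 DG_0 G2_S BVar_eq[OF h, of x] by simp
  also have "\<dots> = (\<integral>w. batch_sum ?BV H Bf act W (Suc n) h x w \<partial>M)"
    unfolding sum_Suc using S by (simp add: prob_space)
  finally show "(\<integral>w. (dev W h x w)\<^sup>2 \<partial>M) =
    (\<integral>w. batch_sum ?BV H Bf act W (Suc n) h x w \<partial>M)" .
qed

lemma dev_after_horizon: "dev W (Suc H) x w = 0"
  unfolding dev_def ret_def Val_def by simp

lemma integral_dev_square_eq_batch_sum:
  assumes "1 \<le> h" "h \<le> H + 1" "H + 1 - h \<le> n"
  shows "integrable M (batch_sum (BVar M W H Bf act) H Bf act W n h x) \<and>
    (\<integral>w. (dev W h x w)\<^sup>2 \<partial>M) =
      (\<integral>w. batch_sum (BVar M W H Bf act) H Bf act W n h x w \<partial>M)"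
  using assms
proof (induction n arbitrary: h x)
  case 0
  then have "h = Suc H" by simp
  moreover have "batch_sum (BVar M W H Bf act) H Bf act W 0 h x = (\<lambda>_. 0)" by (rule ext) simp
  ultimately show ?case by (simp add: dev_after_horizon)
next
  case (Suc n)
  show ?case
  proof (cases "h \<le> H")
    case True
    then have h: "h \<in> {1..H}" using Suc.prems by simp
    have "1 \<le> Bf h x" "h + Bf h x \<le> H + 1" using batch_length_bounds[OF h] by auto
    then have "1 \<le> h + Bf h x" "h + Bf h x \<le> H + 1" "H + 1 - (h + Bf h x) \<le> n"
      using Suc.prems by auto
    then have "integrable M (batch_sum (BVar M W H Bf act) H Bf act W n (h + Bf h x) y)"
      and "(\<integral>w. (dev W (h + Bf h x) y w)\<^sup>2 \<partial>M) =
        (\<integral>w. batch_sum (BVar M W H Bf act) H Bf act W n (h + Bf h x) y w \<partial>M)" for y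
      using Suc.IH by blast+
    then show ?thesis using integral_dev_square_step[OF h, where x=x and n=n] by blast
  next
    case False
    then have "h = Suc H" using Suc.prems by simp
    moreover have "batch_sum (BVar M W H Bf act) H Bf act W (Suc n) (Suc H) x = (\<lambda>_. 0)" by (rule ext) simp
    ultimately show ?thesis by (simp add: dev_after_horizon)
  qed
qed

lemma integral_dev_square_le: "1 \<le> h \<Longrightarrow> (\<integral>w. (dev W h x w)\<^sup>2 \<partial>M) \<le> (real H)\<^sup>2"
  using dev_bound[of h _ x] integrable_dev_square[of h x]
  by (intro integral_le_const AE_I2) (auto simp: abs_le_square_iff[symmetric])

end

theorem lemma5:
  fixes M :: "'w measure"
    and W :: "nat \<Rightarrow> 'w \<Rightarrow> ('s::finite, 'a::finite) realization"
    and H l :: nat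
    and Bf :: "nat \<Rightarrow> 's \<Rightarrow> nat"
    and act :: "nat \<Rightarrow> 's \<Rightarrow> (nat \<Rightarrow> ('s,'a) realization) \<Rightarrow> nat \<Rightarrow> 's \<Rightarrow> 'a"
    and s :: 's
  assumes "prob_space M"
    and "prob_space.indep_vars M (\<lambda>_. real_space) W {1..H}"
    and "\<forall>t\<in>{1..H}. \<forall>w\<in>space M. \<forall>p. fst (W t w p) \<in> {0..1}"
    and "l \<ge> 1"
    and "ABP M W H l Bf act"
  shows "(\<integral>w. (\<Sum>i=1..H. (let t = tb H Bf act W s w i in
              if t \<le> H then BVar M W H Bf act t (state_at Bf act W 1 s w t) else 0)) \<partial>M)
           = (\<integral>w. ((\<Sum>t=1..H. reward_at Bf act W 1 s w t) - Val M W H Bf act 1 s)\<^sup>2 \<partial>M)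
       \<and> (\<integral>w. ((\<Sum>t=1..H. reward_at Bf act W 1 s w t) - Val M W H Bf act 1 s)\<^sup>2 \<partial>M)
           \<le> (real H)\<^sup>2"
proof -
  interpret batched_mdp M W H l Bf act
    using assms by (intro batched_mdp.intro batched_mdp_axioms.intro) auto
  have "(\<integral>w. (\<Sum>i=1..H. (let t = tb H Bf act W s w i in
      if t \<le> H then BVar M W H Bf act t (state_at Bf act W 1 s w t) else 0)) \<partial>M)
    = (\<integral>w. batch_sum (BVar M W H Bf act) H Bf act W H 1 s w \<partial>M)"
    by (simp only: sum_tb_eq_batch_sum[OF batch_lengths_fit])
  also have "\<dots> = (\<integral>w. (dev W 1 s w)\<^sup>2 \<partial>M)"
    using integral_dev_square_eq_batch_sum[of 1 H s] by simp
  finally show ?thesis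
    using integral_dev_square_le[of 1 s] by (simp add: dev_def ret_def)
qed

end
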